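(* Let $P$ be the transition matrix of an irreducible classical Markov chain on a countable state space $\Lambda$, and consider the associated OQRW with $\mathcal H=\mathbb C$, $\mathcal K=\ell^2(\Lambda)$, $B^i_j=\sqrt{P(j,i)}U^i_j$ ($|U^i_j|=1$). Then for every faithful initial probability measure $\rho^{(0)}$ (i.e. $\rho^{(0)}_i>0$ for all $i\in\Lambda$), the QMC $(\rho^{(0)},(\mathcal E^{(n)})_{n\ge0})$ associated with this OQRW is irreducible.
   Context: A stochastic matrix $P$ has nonnegative entries with $\sum_jP(i,j)=1$. $i\to j$ means $P^n(i,j)>0$ for some $n\in\mathbb N$; the chain is irreducible if $i\to j$ and $j\to i$ for all $i,j\in\Lambda$. States of $\mathcal B$ are probability measures $\rho=(\rho_i)$ identified with $\sum_i\rho_i|i\rangle\langle i|$. The OQRW: $\mathcal M(\rho)=\sum_i(\sum_jB^i_j\rho_j\overline{B^i_j})|i\rangle\langle i|$, $\rho^{(n)}=\mathcal M^n(\rho^{(0)})$, $\Lambda(\rho^{(n)})=\{i:\rho^{(n)}_i\ne0\}$, $M^i_j=B^i_j|i\rangle\langle j|$. $\mathcal B$ is the commutative algebra of bounded diagonal operators on $\ell^2(\Lambda)$, $\mathcal A=\bigotimes_{k\in\mathbb Z_+}\mathcal B$. Transition expectations: $\mathcal E^{(n)}(x\otimes y)=\sum_{j\in\Lambda(\rho^{(n)})}\sum_i\frac{\mathrm{Tr}((\rho^{(n)}_j|j\rangle\langle j|)x)}{\rho^{(n)}_j}{M^i_j}^*yM^i_j$. $\bar b(n)$ is the strong limit as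 $k\to\infty$ of $\mathcal E^{(n)}(I\otimes\cdots\otimes\mathcal E^{(n+k)}(I\otimes I))$; $E_{0]}(a_0\otimes\cdots\otimes a_n\otimes I\otimes\cdots)=\mathcal E^{(0)}(a_0\otimes\cdots\otimes\mathcal E^{(n)}(a_n\otimes\bar b(n+1)))$, extended to $\mathcal A$ by limits. The QMC is reducible if there exist a projection $p\in\mathcal B$, $p\ne0,I$, and $n_0$ with $E_{0]}(p_{[n_0}ap_{[n_0})=E_{0]}(a)$ for all $a\in\mathcal A$, where $p_{[n}=I\otimes\cdots\otimes I\otimes p\otimes p\otimes\cdots$ ($p$ from the $n$-th position on); otherwise irreducible. *)

theory Defs
  imports "HOL-Analysis.Analysis"
begin

definition stochastic :: "('a \<Rightarrow> 'a \<Rightarrow> real) \<Rightarrow> bool" where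
  "stochastic P \<longleftrightarrow> (\<forall>i j. 0 \<le> P i j) \<and> (\<forall>i. (P i has_sum 1) UNIV)"

fun mpow :: "('a \<Rightarrow> 'a \<Rightarrow> real) \<Rightarrow> nat \<Rightarrow> 'a \<Rightarrow> 'a \<Rightarrow> real" where
  "mpow P 0 i j = (if i = j then 1 else 0)"
| "mpow P (Suc n) i j = (\<Sum>\<^sub>\<infinity>k. mpow P n i k * P k j)"

definition leads_to :: "('a \<Rightarrow> 'a \<Rightarrow> real) \<Rightarrow> 'a \<Rightarrow> 'a \<Rightarrow> bool" where
  "leads_to P i j \<longleftrightarrow> (\<exists>n. mpow P n i j > 0)"

definition irreducible_chain :: "('a \<Rightarrow> 'a \<Rightarrow> real) \<Rightarrow> bool" where
  "irreducible_chain P \<longleftrightarrow> (\<forall>i j. leads_to P i j \<and> leads_to P j i)"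

definition prob_measure :: "('a \<Rightarrow> real) \<Rightarrow> bool" where
  "prob_measure r \<longleftrightarrow> (\<forall>i. 0 \<le> r i) \<and> (r has_sum 1) UNIV"

text \<open>An element of the commutative algebra B of bounded diagonal operators on
  l2(Lambda) is represented by its diagonal, a bounded function Lambda -> complex.\<close>

definition diag_bdd :: "('a \<Rightarrow> complex) \<Rightarrow> bool" where
  "diag_bdd x \<longleftrightarrow> (\<exists>C. \<forall>a. cmod (x a) \<le> C)"

definition is_projection :: "('a \<Rightarrow> complex) \<Rightarrow> bool" where
  "is_projection p \<longleftrightarrow> (\<forall>a. cnj (p a) = p a \<and> p a * p a = p a)"

definition strong_conv :: "(nat \<Rightarrow> 'a \<Rightarrow> complex) \<Rightarrow> ('a \<Rightarrow> complex) \<Rightarrow> bool" where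
  "strong_conv Ds D \<longleftrightarrow>
     (\<forall>v. (\<lambda>a. (cmod (v a))\<^sup>2) summable_on UNIV \<longrightarrow>
        (\<forall>\<^sub>F k in sequentially. (\<lambda>a. (cmod ((Ds k a - D a) * v a))\<^sup>2) summable_on UNIV) \<and>
        ((\<lambda>k. \<Sum>\<^sub>\<infinity>a. (cmod ((Ds k a - D a) * v a))\<^sup>2) \<longlonglongrightarrow> 0))"

definition strong_lim :: "(nat \<Rightarrow> 'a \<Rightarrow> complex) \<Rightarrow> ('a \<Rightarrow> complex)" where
  "strong_lim Ds = (THE D. strong_conv Ds D)"

text \<open>\<open>Bm i j\<close> is the coefficient B^i_j (an operator on H = C, i.e. a complex number).
  States of B (diagonal density operators) are represented by their diagonal.\<close>

definition oqrw :: "('a \<Rightarrow> 'a \<Rightarrow> complex) \<Rightarrow> ('a \<Rightarrow> complex) \<Rightarrow> ('a \<Rightarrow> complex)" where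
  "oqrw Bm r i = (\<Sum>\<^sub>\<infinity>j. Bm i j * r j * cnj (Bm i j))"

fun rho_seq :: "('a \<Rightarrow> 'a \<Rightarrow> complex) \<Rightarrow> ('a \<Rightarrow> real) \<Rightarrow> nat \<Rightarrow> 'a \<Rightarrow> complex" where
  "rho_seq Bm rho0 0 = (\<lambda>i. complex_of_real (rho0 i))"
| "rho_seq Bm rho0 (Suc n) = oqrw Bm (rho_seq Bm rho0 n)"

text \<open>Transition expectation E^(n)(x (x) y), a diagonal operator:
  the sum over j in Lambda(rho^(n)) of Tr((rho_j |j><j|) x)/rho_j * sum_i (M^i_j)^* y M^i_j,
  where (M^i_j)^* y M^i_j = cnj(B^i_j) y_i B^i_j |j><j|.\<close>
definition TE :: "('a \<Rightarrow> 'a \<Rightarrow> complex) \<Rightarrow> ('a \<Rightarrow> real) \<Rightarrow> nat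
                   \<Rightarrow> ('a \<Rightarrow> complex) \<Rightarrow> ('a \<Rightarrow> complex) \<Rightarrow> ('a \<Rightarrow> complex)" where
  "TE Bm rho0 n x y j =
     (if rho_seq Bm rho0 n j \<noteq> 0
      then (rho_seq Bm rho0 n j * x j) / rho_seq Bm rho0 n j *
           (\<Sum>\<^sub>\<infinity>i. cnj (Bm i j) * y i * Bm i j)
      else 0)"

text \<open>\<open>chainE Bm rho0 n [a_n,...,a_m] y\<close> = E^(n)(a_n (x) E^(n+1)(... E^(m)(a_m (x) y))).\<close>
fun chainE :: "('a \<Rightarrow> 'a \<Rightarrow> complex) \<Rightarrow> ('a \<Rightarrow> real) \<Rightarrow> nat
                 \<Rightarrow> ('a \<Rightarrow> complex) list \<Rightarrow> ('a \<Rightarrow> complex) \<Rightarrow> ('a \<Rightarrow> complex)" where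
  "chainE Bm rho0 n [] y = y"
| "chainE Bm rho0 n (a # as) y = TE Bm rho0 n a (chainE Bm rho0 (Suc n) as y)"

definition bbar :: "('a \<Rightarrow> 'a \<Rightarrow> complex) \<Rightarrow> ('a \<Rightarrow> real) \<Rightarrow> nat \<Rightarrow> ('a \<Rightarrow> complex)" where
  "bbar Bm rho0 n = strong_lim (\<lambda>k. chainE Bm rho0 n (replicate (Suc k) (\<lambda>_. 1)) (\<lambda>_. 1))"

text \<open>E_{0]} on local elementary tensors a_0 (x) ... (x) a_n (x) I (x) I ... (given as a list).\<close>
definition E0loc :: "('a \<Rightarrow> 'a \<Rightarrow> complex) \<Rightarrow> ('a \<Rightarrow> real) \<Rightarrow> ('a \<Rightarrow> complex) list \<Rightarrow> ('a \<Rightarrow> complex)" where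
  "E0loc Bm rho0 as = chainE Bm rho0 0 as (bbar Bm rho0 (length as))"

text \<open>Extension of E_{0]} by (strong) limits to infinite elementary tensors
  f 0 (x) f 1 (x) f 2 (x) ...\<close>
definition E0 :: "('a \<Rightarrow> 'a \<Rightarrow> complex) \<Rightarrow> ('a \<Rightarrow> real) \<Rightarrow> (nat \<Rightarrow> 'a \<Rightarrow> complex) \<Rightarrow> ('a \<Rightarrow> complex)" where
  "E0 Bm rho0 f = strong_lim (\<lambda>N. E0loc Bm rho0 (map f [0..<N]))"

definition local_elem :: "(nat \<Rightarrow> 'a \<Rightarrow> complex) \<Rightarrow> bool" where
  "local_elem f \<longleftrightarrow> (\<forall>k. diag_bdd (f k)) \<and> (\<exists>m. \<forall>k\<ge>m. f k = (\<lambda>_. 1))"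

text \<open>p_[n0 a p_[n0 for an elementary tensor a (componentwise product of diagonals).\<close>
definition compress :: "('a \<Rightarrow> complex) \<Rightarrow> nat \<Rightarrow> (nat \<Rightarrow> 'a \<Rightarrow> complex) \<Rightarrow> (nat \<Rightarrow> 'a \<Rightarrow> complex)" where
  "compress p n0 f = (\<lambda>k. if n0 \<le> k then (\<lambda>a. p a * f k a * p a) else f k)"

definition QMC_reducible :: "('a \<Rightarrow> 'a \<Rightarrow> complex) \<Rightarrow> ('a \<Rightarrow> real) \<Rightarrow> bool" where
  "QMC_reducible Bm rho0 \<longleftrightarrow>
     (\<exists>p n0. diag_bdd p \<and> is_projection p \<and> p \<noteq> (\<lambda>_. 0) \<and> p \<noteq> (\<lambda>_. 1) \<and>
        (\<forall>f. local_elem f \<longrightarrow> E0 Bm rho0 (compress p n0 f) = E0 Bm rho0 f))"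

definition QMC_irreducible :: "('a \<Rightarrow> 'a \<Rightarrow> complex) \<Rightarrow> ('a \<Rightarrow> real) \<Rightarrow> bool" where
  "QMC_irreducible Bm rho0 \<longleftrightarrow> \<not> QMC_reducible Bm rho0"

end

theory Submission
  imports Defs
begin

text \<open>
  With B^i_j = sqrt(P(j,i)) U^i_j the phases cancel in every sandwich: B rho B^* and B^* y B
  are multiplication by P(j,i). Hence rho^(n) = rho^(0) P^n, which stays faithful because in an
  irreducible chain with at least two states (a nontrivial projection provides them) every state
  has a predecessor; consequently E^(n)(x (x) y) = x P y and bbar(n) = I. If p reduced the QMC
  from n0 on, test it on the tensor with I - p at place n0 and I elsewhere: compression by p
  kills it, yet its image under E_0] is P^n0 (I - p), which is positive somewhere because
  I - p is nonzero and positivity propagates backwards along predecessors.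
\<close>

lemma infsum_complex_of_real:
  fixes f :: "'a \<Rightarrow> real"
  shows "(\<Sum>\<^sub>\<infinity>x. complex_of_real (f x)) = complex_of_real (\<Sum>\<^sub>\<infinity>x. f x)"
proof (cases "f summable_on UNIV")
  case True
  then show ?thesis
    by (metis has_sum_infsum has_sum_of_real infsumI)
next
  case False
  then have "\<not> (\<lambda>x. complex_of_real (f x)) summable_on UNIV"
    using summable_on_Re by fastforce
  with False show ?thesis
    by (simp add: infsum_not_exists)
qed

lemma term_le_infsum:
  fixes f :: "'a \<Rightarrow> real"
  assumes "f summable_on A" "x \<in> A" "\<And>y. y \<in> A \<Longrightarrow> 0 \<le> f y"
  shows "f x \<le> infsum f A"
  using finite_sum_le_infsum[OF assms(1), of "{x}"] assms by auto

lemma strong_conv_unique: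
  assumes "strong_conv Ds D" "strong_conv Ds D'"
  shows "D = D'"
proof
  fix a
  define v :: "'a \<Rightarrow> complex" where "v b = (if b = a then 1 else 0)" for b
  have at_a: "((\<lambda>b. (cmod (w b * v b))\<^sup>2) has_sum (cmod (w a))\<^sup>2) UNIV" for w
    by (rule has_sum_finite_neutralI[of "{a}"]) (auto simp: v_def)
  have "(\<lambda>b. (cmod (v b))\<^sup>2) summable_on UNIV"
    using at_a[of "\<lambda>_. 1"] by (auto intro: has_sum_imp_summable)
  have pointwise: "(\<lambda>k. Ds k a) \<longlonglongrightarrow> E a" if "strong_conv Ds E" for E
  proof -
    have "(\<Sum>\<^sub>\<infinity>b. (cmod ((Ds k b - E b) * v b))\<^sup>2) = (cmod (Ds k a - E a))\<^sup>2" for k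
      using at_a by (rule infsumI)
    moreover have "(\<lambda>k. \<Sum>\<^sub>\<infinity>b. (cmod ((Ds k b - E b) * v b))\<^sup>2) \<longlonglongrightarrow> 0"
      using that \<open>(\<lambda>b. (cmod (v b))\<^sup>2) summable_on UNIV\<close> unfolding strong_conv_def by blast
    ultimately have "(\<lambda>k. sqrt ((cmod (Ds k a - E a))\<^sup>2)) \<longlonglongrightarrow> sqrt 0"
      by (simp add: tendsto_real_sqrt)
    then show ?thesis
      by (simp add: LIM_zero_cancel tendsto_norm_zero_iff)
  qed
  show "D a = D' a"
    using pointwise[OF assms(1)] pointwise[OF assms(2)] by (rule LIMSEQ_unique)
qed

lemma strong_lim_eventually_const:
  assumes "\<forall>\<^sub>F k in sequentially. Ds k = D"
  shows "strong_lim Ds = D"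
proof -
  have "strong_conv Ds D"
    unfolding strong_conv_def
  proof (intro allI impI conjI)
    fix v :: "'a \<Rightarrow> complex"
    show "\<forall>\<^sub>F k in sequentially. (\<lambda>a. (cmod ((Ds k a - D a) * v a))\<^sup>2) summable_on UNIV"
      using assms by eventually_elim simp
    have "\<forall>\<^sub>F k in sequentially. (\<Sum>\<^sub>\<infinity>a. (cmod ((Ds k a - D a) * v a))\<^sup>2) = 0"
      using assms by eventually_elim simp
    then show "(\<lambda>k. \<Sum>\<^sub>\<infinity>a. (cmod ((Ds k a - D a) * v a))\<^sup>2) \<longlonglongrightarrow> 0"
      by (rule tendsto_eventually)
  qed
  then show ?thesis
    unfolding strong_lim_def using strong_conv_unique by blast
qed

definition markov_op :: "('a \<Rightarrow> 'a \<Rightarrow> real) \<Rightarrow> ('a \<Rightarrow> 'b::real_normed_vector) \<Rightarrow> 'a \<Rightarrow> 'b" where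
  "markov_op P y j = (\<Sum>\<^sub>\<infinity>i. P j i *\<^sub>R y i)"

definition markov_dual :: "('a \<Rightarrow> 'a \<Rightarrow> real) \<Rightarrow> ('a \<Rightarrow> real) \<Rightarrow> 'a \<Rightarrow> real" where
  "markov_dual P r i = (\<Sum>\<^sub>\<infinity>j. P j i * r j)"

lemma irreducible_chain_has_predecessor:
  assumes "irreducible_chain P" "stochastic P" "c \<noteq> b"
  shows "\<exists>k. P k b > 0"
proof (rule ccontr)
  assume "\<nexists>k. P k b > 0"
  with assms(2) have "P k b = 0" for k
    unfolding stochastic_def by (meson antisym not_le)
  moreover obtain n where "mpow P n c b > 0"
    using assms(1) unfolding irreducible_chain_def leads_to_def by blast
  ultimately show False
    using assms(3) by (cases n) auto
qed

context
  fixes P :: "'a \<Rightarrow> 'a \<Rightarrow> real"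
  assumes stochastic: "stochastic P"
begin

lemma stochastic_nonneg: "0 \<le> P i j"
  using stochastic unfolding stochastic_def by auto

lemma stochastic_row_has_sum: "(P i has_sum 1) UNIV"
  using stochastic unfolding stochastic_def by auto

lemma stochastic_le_one: "P i j \<le> 1"
  using finite_sum_le_has_sum[OF stochastic_row_has_sum, of "{j}"] stochastic_nonneg by auto

lemma markov_op_const: "markov_op P (\<lambda>_. c) = (\<lambda>_. c)"
proof
  fix j
  have "(\<Sum>\<^sub>\<infinity>i. P j i *\<^sub>R c) = (\<Sum>\<^sub>\<infinity>i. P j i) *\<^sub>R c"
    using stochastic_row_has_sum by (blast intro: infsum_scaleR_left has_sum_imp_summable)
  also have "(\<Sum>\<^sub>\<infinity>i. P j i) = 1"
    using stochastic_row_has_sum by (rule infsumI)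
  finally show "markov_op P (\<lambda>_. c) j = c"
    by (simp add: markov_op_def)
qed

lemma markov_op_complex_of_real:
  "markov_op P (\<lambda>i. complex_of_real (y i)) = (\<lambda>j. complex_of_real (markov_op P y j))"
  by (rule ext) (simp add: markov_op_def scaleR_conv_of_real infsum_complex_of_real flip: of_real_mult)

lemma funpow_markov_op_complex_of_real:
  "(markov_op P ^^ n) (\<lambda>i. complex_of_real (y i)) = (\<lambda>j. complex_of_real ((markov_op P ^^ n) y j))"
  by (induction n) (simp_all add: markov_op_complex_of_real)

lemma markov_op_summable:
  fixes y :: "'a \<Rightarrow> real"
  assumes "\<And>i. 0 \<le> y i \<and> y i \<le> 1"
  shows "(\<lambda>i. P j i * y i) summable_on UNIV"
proof (rule summable_on_comparison_test)
  show "P j summable_on UNIV"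
    using stochastic_row_has_sum by (rule has_sum_imp_summable)
  show "P j i * y i \<le> P j i" "0 \<le> P j i * y i" for i
    using assms[of i] stochastic_nonneg[of j i] by (simp_all add: mult_left_le)
qed

lemma markov_op_unit_interval:
  fixes y :: "'a \<Rightarrow> real"
  assumes "\<And>i. 0 \<le> y i \<and> y i \<le> 1"
  shows "0 \<le> markov_op P y j \<and> markov_op P y j \<le> 1"
proof
  show "0 \<le> markov_op P y j"
    unfolding markov_op_def using assms stochastic_nonneg by (auto intro: infsum_nonneg)
  have "markov_op P y j \<le> infsum (P j) UNIV"
    unfolding markov_op_def real_scaleR_def
  proof (rule infsum_mono[OF markov_op_summable[OF assms]])
    show "P j summable_on UNIV"
      using stochastic_row_has_sum by (rule has_sum_imp_summable)
    show "P j i * y i \<le> P j i" for i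
      using assms[of i] stochastic_nonneg[of j i] by (simp add: mult_left_le)
  qed
  also have "\<dots> = 1"
    using stochastic_row_has_sum by (rule infsumI)
  finally show "markov_op P y j \<le> 1" .
qed

lemma markov_op_pos:
  fixes y :: "'a \<Rightarrow> real"
  assumes "\<And>i. 0 \<le> y i \<and> y i \<le> 1" "P j i > 0" "y i > 0"
  shows "markov_op P y j > 0"
proof -
  have "P j i * y i \<le> markov_op P y j"
    unfolding markov_op_def real_scaleR_def
    by (rule term_le_infsum[OF markov_op_summable[OF assms(1)]])
       (use assms(1) stochastic_nonneg in auto)
  with assms(2,3) show ?thesis
    by (smt (verit) mult_pos_pos)
qed

lemma funpow_markov_op_pos:
  fixes y :: "'a \<Rightarrow> real"
  assumes "\<And>b. \<exists>c. P c b > 0" "\<And>i. 0 \<le> y i \<and> y i \<le> 1" "y b > 0"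
  shows "\<exists>j. (markov_op P ^^ n) y j > 0"
proof (induction n)
  case 0
  with assms(3) show ?case by auto
next
  case (Suc n)
  then obtain b where b: "(markov_op P ^^ n) y b > 0" by blast
  obtain c where "P c b > 0" using assms(1) by blast
  moreover have "0 \<le> (markov_op P ^^ n) y i \<and> (markov_op P ^^ n) y i \<le> 1" for i
    by (induction n arbitrary: i) (auto simp: assms(2) markov_op_unit_interval)
  ultimately have "markov_op P ((markov_op P ^^ n) y) c > 0"
    using b by (blast intro: markov_op_pos)
  then show ?case by auto
qed

lemma markov_dual_summable:
  assumes "\<And>j. 0 \<le> r j" "r summable_on UNIV"
  shows "markov_dual P r summable_on UNIV"
proof -
  have row: "((\<lambda>i. P j i * r j) has_sum r j) UNIV" for j
    using has_sum_cmult_left[OF stochastic_row_has_sum] by fastforce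
  have abs_eq: "\<bar>P j i * r j\<bar> = P j i * r j" for i j
    using assms(1) stochastic_nonneg by simp
  \<comment> \<open>Tonelli: the double series of the nonnegative terms has rows summing to \<open>r j\<close>.\<close>
  have "(\<lambda>(j, i). P j i * r j) summable_on UNIV \<times> UNIV"
  proof (rule abs_summable_summable)
    show "(\<lambda>x. norm ((\<lambda>(j, i). P j i * r j) x)) summable_on UNIV \<times> UNIV"
      unfolding Infinite_Sum.abs_summable_on_Sigma_iff
      using assms by (simp add: abs_eq row[THEN infsumI] row[THEN has_sum_imp_summable])
  qed
  then have "(\<lambda>(i, j). P j i * r j) summable_on UNIV \<times> UNIV"
    by (subst summable_on_swap) simp
  then show ?thesis
    unfolding markov_dual_def by (rule summable_on_Sigma_banach[where f = "\<lambda>i j. P j i * r j", simplified])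
qed

lemma markov_dual_pos:
  assumes "\<And>j. 0 < r j" "r summable_on UNIV" "P c i > 0"
  shows "markov_dual P r i > 0"
proof -
  have "(\<lambda>j. P j i * r j) summable_on UNIV"
  proof (rule summable_on_comparison_test[OF assms(2)])
    show "P j i * r j \<le> r j" "0 \<le> P j i * r j" for j
      using assms(1)[of j] stochastic_nonneg[of j i] stochastic_le_one[of j i]
      by (simp_all add: mult_left_le_one_le)
  qed
  then have "P c i * r c \<le> markov_dual P r i"
    unfolding markov_dual_def
    by (rule term_le_infsum) (use assms(1) stochastic_nonneg in \<open>auto intro!: mult_nonneg_nonneg simp: less_imp_le\<close>)
  with assms(1,3) show ?thesis
    by (smt (verit) mult_pos_pos)
qed

lemma funpow_markov_dual_pos:
  assumes "\<And>b. \<exists>c. P c b > 0" "\<And>j. 0 < r j" "r summable_on UNIV"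
  shows "(markov_dual P ^^ n) r i > 0"
proof -
  have "(\<forall>i. (markov_dual P ^^ n) r i > 0) \<and> (markov_dual P ^^ n) r summable_on UNIV"
  proof (induction n)
    case 0
    with assms(2,3) show ?case by simp
  next
    case (Suc n)
    have "markov_dual P ((markov_dual P ^^ n) r) i > 0" for i
    proof -
      obtain c where "P c i > 0" using assms(1) by blast
      with Suc show ?thesis by (blast intro: markov_dual_pos)
    qed
    with Suc show ?case
      by (auto intro: markov_dual_summable less_imp_le)
  qed
  then show ?thesis by blast
qed

end

lemma projection_zero_or_one:
  assumes "is_projection p"
  shows "p a = 0 \<or> p a = 1"
proof -
  have "p a * (p a - 1) = 0"
    using assms unfolding is_projection_def by (simp add: algebra_simps)
  then show ?thesis by simp
qed

lemma sandwich_eq_if_cnj_mult_self: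
  fixes z r :: complex
  assumes "cnj z * z = w"
  shows "z * r * cnj z = w * r" "cnj z * r * z = w * r"
  using assms by (simp_all add: ac_simps)

definition oqrw_coeff :: "('a \<Rightarrow> 'a \<Rightarrow> real) \<Rightarrow> ('a \<Rightarrow> 'a \<Rightarrow> complex) \<Rightarrow> 'a \<Rightarrow> 'a \<Rightarrow> complex" where
  "oqrw_coeff P U i j = complex_of_real (sqrt (P j i)) * U i j"

context
  fixes P :: "'a \<Rightarrow> 'a \<Rightarrow> real" and U :: "'a \<Rightarrow> 'a \<Rightarrow> complex"
  assumes stochastic: "stochastic P" and unimodular: "\<forall>i j. cmod (U i j) = 1"
begin

lemma cnj_oqrw_coeff_mult_self: "cnj (oqrw_coeff P U i j) * oqrw_coeff P U i j = complex_of_real (P j i)"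
proof -
  have "cmod (oqrw_coeff P U i j) = sqrt (P j i)"
    using unimodular stochastic_nonneg[OF stochastic, of j i] by (simp add: oqrw_coeff_def norm_mult)
  then show ?thesis
    using stochastic_nonneg[OF stochastic, of j i]
    by (metis complex_norm_square mult.commute of_real_power real_sqrt_pow2)
qed

lemma rho_seq_oqrw:
  "rho_seq (oqrw_coeff P U) rho0 n = (\<lambda>i. complex_of_real ((markov_dual P ^^ n) rho0 i))"
proof (induction n)
  case (Suc n)
  show ?case
  proof
    fix i
    have "rho_seq (oqrw_coeff P U) rho0 (Suc n) i
        = (\<Sum>\<^sub>\<infinity>j. complex_of_real (P j i * (markov_dual P ^^ n) rho0 j))"
      using Suc by (simp add: oqrw_def sandwich_eq_if_cnj_mult_self(1)[OF cnj_oqrw_coeff_mult_self])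
    also have "\<dots> = complex_of_real ((markov_dual P ^^ Suc n) rho0 i)"
      by (simp add: infsum_complex_of_real markov_dual_def del: of_real_mult)
    finally show "rho_seq (oqrw_coeff P U) rho0 (Suc n) i = complex_of_real ((markov_dual P ^^ Suc n) rho0 i)" .
  qed
qed simp

lemma TE_oqrw:
  assumes "\<And>j. rho_seq (oqrw_coeff P U) rho0 n j \<noteq> 0"
  shows "TE (oqrw_coeff P U) rho0 n x y = (\<lambda>j. x j * markov_op P y j)"
  using assms by (intro ext)
    (simp add: TE_def markov_op_def scaleR_conv_of_real sandwich_eq_if_cnj_mult_self(2)[OF cnj_oqrw_coeff_mult_self])

end

lemma chainE_append:
  "chainE Bm rho0 n (as @ bs) y = chainE Bm rho0 n as (chainE Bm rho0 (n + length as) bs y)"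
  by (induction as arbitrary: n) auto

context
  fixes Bm :: "'a \<Rightarrow> 'a \<Rightarrow> complex" and rho0 :: "'a \<Rightarrow> real" and P :: "'a \<Rightarrow> 'a \<Rightarrow> real"
  assumes TE_markov: "\<And>n x y. TE Bm rho0 n x y = (\<lambda>j. x j * markov_op P y j)"
    and stochastic: "stochastic P"
begin

lemma chainE_zero: "chainE Bm rho0 n as (\<lambda>_. 0) = (\<lambda>_. 0)"
  by (induction as arbitrary: n) (simp_all add: TE_markov markov_op_const[OF stochastic])

lemma chainE_zero_entry: "chainE Bm rho0 n (as @ (\<lambda>_. 0) # bs) y = (\<lambda>_. 0)"
  by (simp add: chainE_append TE_markov chainE_zero)

lemma chainE_replicate_one: "chainE Bm rho0 n (replicate m (\<lambda>_. 1)) y = (markov_op P ^^ m) y"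
  by (induction m arbitrary: n) (simp_all add: TE_markov)

lemma funpow_markov_op_one: "(markov_op P ^^ m) (\<lambda>_. 1) = (\<lambda>_. 1 :: complex)"
  by (induction m) (simp_all add: markov_op_const[OF stochastic])

lemma bbar_eq_one: "bbar Bm rho0 n = (\<lambda>_. 1)"
  unfolding bbar_def by (rule strong_lim_eventually_const)
    (simp add: chainE_replicate_one funpow_markov_op_one markov_op_const[OF stochastic] del: replicate_Suc)

lemma E0_zero_entry:
  assumes "f k = (\<lambda>_. 0)"
  shows "E0 Bm rho0 f = (\<lambda>_. 0)"
  unfolding E0_def
proof (rule strong_lim_eventually_const, rule eventually_mono[OF eventually_gt_at_top[of k]])
  fix N assume "k < N"
  then have "[0..<N] = [0..<k] @ k # [Suc k..<N]"
    using upt_add_eq_append[of 0 k "N - k"] by (simp add: upt_conv_Cons)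
  with assms show "E0loc Bm rho0 (map f [0..<N]) = (\<lambda>_. 0)"
    by (simp add: E0loc_def chainE_zero_entry)
qed

lemma E0_eventually_one:
  assumes "\<And>k. m \<le> k \<Longrightarrow> f k = (\<lambda>_. 1)"
  shows "E0 Bm rho0 f = chainE Bm rho0 0 (map f [0..<m]) (\<lambda>_. 1)"
  unfolding E0_def
proof (rule strong_lim_eventually_const, rule eventually_mono[OF eventually_ge_at_top[of m]])
  fix N assume "m \<le> N"
  then have "map f [0..<N] = map f [0..<m] @ replicate (N - m) (\<lambda>_. 1)"
    using assms by (auto intro!: nth_equalityI simp: nth_append)
  then show "E0loc Bm rho0 (map f [0..<N]) = chainE Bm rho0 0 (map f [0..<m]) (\<lambda>_. 1)"
    by (simp add: E0loc_def bbar_eq_one chainE_append chainE_replicate_one funpow_markov_op_one)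
qed

lemma compress_changes_E0:
  fixes p :: "'a \<Rightarrow> complex" and n0 :: nat
  assumes has_predecessor: "\<And>b. \<exists>c. P c b > 0" and "is_projection p" "p a = 0"
  defines "f \<equiv> \<lambda>k. if k = n0 then (\<lambda>b. 1 - p b) else (\<lambda>_. 1)"
  shows "local_elem f" and "E0 Bm rho0 (compress p n0 f) \<noteq> E0 Bm rho0 f"
proof -
  have p01: "p b = 0 \<or> p b = 1" for b
    using assms(2) by (rule projection_zero_or_one)
  have "cmod (f k b) \<le> 1" for k b
    using p01[of b] by (auto simp: f_def)
  moreover have "\<forall>k \<ge> Suc n0. f k = (\<lambda>_. 1)"
    by (simp add: f_def)
  ultimately show "local_elem f"
    unfolding local_elem_def diag_bdd_def by blast
  define y :: "'a \<Rightarrow> real" where "y b = (if p b = 0 then 1 else 0)" for b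
  have "compress p n0 f n0 = (\<lambda>_. 0)"
    using p01 by (auto simp: compress_def f_def)
  then have "E0 Bm rho0 (compress p n0 f) = (\<lambda>_. 0)"
    by (rule E0_zero_entry)
  moreover have "E0 Bm rho0 f = (\<lambda>b. complex_of_real ((markov_op P ^^ n0) y b))"
  proof -
    have "map f [0..<Suc n0] = replicate n0 (\<lambda>_. 1) @ [\<lambda>b. 1 - p b]"
      by (rule nth_equalityI) (auto simp: f_def nth_append)
    moreover have "(\<lambda>b. 1 - p b) = (\<lambda>b. complex_of_real (y b))"
    proof
      show "1 - p b = complex_of_real (y b)" for b
        using p01[of b] by (auto simp: y_def)
    qed
    moreover have "E0 Bm rho0 f = chainE Bm rho0 0 (map f [0..<Suc n0]) (\<lambda>_. 1)"
      by (rule E0_eventually_one) (simp add: f_def)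
    ultimately show ?thesis
      by (simp add: chainE_append chainE_replicate_one TE_markov markov_op_const[OF stochastic]
          funpow_markov_op_complex_of_real[OF stochastic])
  qed
  moreover obtain j where "(markov_op P ^^ n0) y j > 0"
  proof -
    have "0 \<le> y b \<and> y b \<le> 1" for b
      by (simp add: y_def)
    moreover have "y a > 0"
      using assms(3) by (simp add: y_def)
    ultimately show thesis
      using funpow_markov_op_pos[OF stochastic has_predecessor] that by blast
  qed
  ultimately show "E0 Bm rho0 (compress p n0 f) \<noteq> E0 Bm rho0 f"
    by (metis less_irrefl of_real_0 of_real_eq_iff)
qed

end

theorem mainTheorem14:
  fixes P :: "'a::countable \<Rightarrow> 'a \<Rightarrow> real"
    and U :: "'a \<Rightarrow> 'a \<Rightarrow> complex"
    and rho0 :: "'a \<Rightarrow> real"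
  assumes "stochastic P"
    and "irreducible_chain P"
    and "\<forall>i j. cmod (U i j) = 1"
    and "prob_measure rho0"
    and "\<forall>i. rho0 i > 0"
  shows "QMC_irreducible (\<lambda>i j. complex_of_real (sqrt (P j i)) * U i j) rho0"
proof -
  have coeff: "(\<lambda>i j. complex_of_real (sqrt (P j i)) * U i j) = oqrw_coeff P U"
    by (intro ext) (simp add: oqrw_coeff_def)
  show ?thesis
    unfolding QMC_irreducible_def coeff
  proof
    assume "QMC_reducible (oqrw_coeff P U) rho0"
    then obtain p n0 where p: "is_projection p" "p \<noteq> (\<lambda>_. 0)" "p \<noteq> (\<lambda>_. 1)"
      and invariant: "\<And>f. local_elem f \<Longrightarrow> E0 (oqrw_coeff P U) rho0 (compress p n0 f) = E0 (oqrw_coeff P U) rho0 f"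
      unfolding QMC_reducible_def by blast
    obtain a0 a1 where a0: "p a0 = 0" and a1: "p a1 = 1"
      using p projection_zero_or_one by (metis ext)
    have has_predecessor: "\<exists>c. P c b > 0" for b
      using irreducible_chain_has_predecessor[OF assms(2,1)] a0 a1 by (metis zero_neq_one)
    have "(markov_dual P ^^ n) rho0 j > 0" for n j
      using funpow_markov_dual_pos[OF assms(1) has_predecessor] assms(4,5)
      unfolding prob_measure_def by (blast intro: has_sum_imp_summable)
    then have "TE (oqrw_coeff P U) rho0 n x y = (\<lambda>j. x j * markov_op P y j)" for n x y
      by (intro TE_oqrw[OF assms(1,3)]) (simp add: rho_seq_oqrw[OF assms(1,3)] less_imp_neq[symmetric])
    with compress_changes_E0[OF _ assms(1) has_predecessor p(1) a0] invariant show False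
      by blast
  qed
qed

end
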